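(* Let $n\ge3$ and $\rho>0$. The function on $T(\mathbb{R}\times\mathbb{B}^n(\rho))$ $$F(x,y)=\sqrt{(1+|\overline{x}|^2)|\overline{y}|^2-\langle\overline{x},\overline{y}\rangle^2+e^{x^0}(y^0)^2}+\frac{\langle\overline{x},\overline{y}\rangle}{1+|\overline{x}|^2}$$ is a cylindrically symmetric Finsler metric with vanishing Douglas curvature.
   Context: Points $x=(x^0,\overline{x})\in\mathbb{R}\times\mathbb{B}^n(\rho)$, tangent vectors $y=(y^0,\overline{y})$, $|\cdot|,\langle\cdot,\cdot\rangle$ Euclidean on $\mathbb{R}^n$. A Finsler metric $F$ is cylindrically symmetric if $F((x^0,O\overline{x}),(y^0,O\overline{y}))=F((x^0,\overline{x}),(y^0,\overline{y}))$ for all $O\in O(n)$. The Douglas curvature is $D^A_{BCD}=\frac{\partial^3}{\partial y^B\partial y^C\partial y^D}\big(G^A-\frac{1}{n+2}\sum_{E=0}^n\frac{\partial G^E}{\partial y^E}y^A\big)$, $A,B,C,D\in\{0,\dots,n\}$, where $G^A=\frac14g^{AB}\{[F^2]_{x^Cy^B}y^C-[F^2]_{x^B}\}$ are the geodesic coefficients ($g_{AB}=\frac12[F^2]_{y^Ay^B}$, summation convention). *)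

theory Defs
  imports "HOL-Analysis.Analysis"
begin

text \<open>Coordinates are indexed by 'n option: None is the index 0 (the x^0 / y^0 coordinate),
  Some i is the i-th coordinate of the R^n part.\<close>

type_synonym 'n pt = "real \<times> (real ^ 'n)"

definition coord :: "'n::finite pt \<Rightarrow> 'n option \<Rightarrow> real" where
  "coord v A = (case A of None \<Rightarrow> fst v | Some i \<Rightarrow> snd v $ i)"

definition cbasis :: "'n option \<Rightarrow> 'n::finite pt" where
  "cbasis A = (case A of None \<Rightarrow> (1, 0) | Some i \<Rightarrow> (0, axis i 1))"

definition px :: "'n option \<Rightarrow> ('n::finite pt \<Rightarrow> 'n pt \<Rightarrow> real) \<Rightarrow> 'n pt \<Rightarrow> 'n pt \<Rightarrow> real" where
  "px A f x y = deriv (\<lambda>t. f (x + t *\<^sub>R cbasis A) y) 0"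

definition py :: "'n option \<Rightarrow> ('n::finite pt \<Rightarrow> 'n pt \<Rightarrow> real) \<Rightarrow> 'n pt \<Rightarrow> 'n pt \<Rightarrow> real" where
  "py A f x y = deriv (\<lambda>t. f x (y + t *\<^sub>R cbasis A)) 0"

definition dirder :: "'a::real_normed_vector \<Rightarrow> ('a \<Rightarrow> real) \<Rightarrow> 'a \<Rightarrow> real" where
  "dirder v f z = deriv (\<lambda>t. f (z + t *\<^sub>R v)) 0"

fun iter_dirder :: "'a::real_normed_vector list \<Rightarrow> ('a \<Rightarrow> real) \<Rightarrow> 'a \<Rightarrow> real" where
  "iter_dirder [] f = f"
| "iter_dirder (v # vs) f = dirder v (iter_dirder vs f)"

definition smooth_on :: "'a::real_normed_vector set \<Rightarrow> ('a \<Rightarrow> real) \<Rightarrow> bool" where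
  "smooth_on U f \<longleftrightarrow> open U \<and> (\<forall>vs. iter_dirder vs f differentiable_on U)"

definition slitTM :: "'n::finite pt set \<Rightarrow> ('n pt \<times> 'n pt) set" where
  "slitTM M = M \<times> (UNIV - {0})"

definition fund_tensor :: "('n::finite pt \<Rightarrow> 'n pt \<Rightarrow> real) \<Rightarrow> 'n pt \<Rightarrow> 'n pt \<Rightarrow> 'n option \<Rightarrow> 'n option \<Rightarrow> real" where
  "fund_tensor F x y A B = 1/2 * py A (py B (\<lambda>x y. (F x y)\<^sup>2)) x y"

definition finsler_metric :: "'n::finite pt set \<Rightarrow> ('n pt \<Rightarrow> 'n pt \<Rightarrow> real) \<Rightarrow> bool" where
  "finsler_metric M F \<longleftrightarrow>
     open M \<and>
     smooth_on (slitTM M) (\<lambda>z. F (fst z) (snd z)) \<and>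
     (\<forall>x\<in>M. \<forall>y. F x y \<ge> 0) \<and>
     (\<forall>x\<in>M. \<forall>y. \<forall>c>0. F x (c *\<^sub>R y) = c * F x y) \<and>
     (\<forall>x\<in>M. \<forall>y. y \<noteq> 0 \<longrightarrow>
        (\<forall>\<xi>::'n option \<Rightarrow> real. \<xi> \<noteq> (\<lambda>_. 0) \<longrightarrow>
           (\<Sum>A\<in>UNIV. \<Sum>B\<in>UNIV. fund_tensor F x y A B * \<xi> A * \<xi> B) > 0))"

definition cyl_symmetric :: "'n::finite pt set \<Rightarrow> ('n pt \<Rightarrow> 'n pt \<Rightarrow> real) \<Rightarrow> bool" where
  "cyl_symmetric M F \<longleftrightarrow>
     (\<forall>Q::real^'n^'n. orthogonal_matrix Q \<longrightarrow>
        (\<forall>x0 xb y0 yb. (x0, xb) \<in> M \<longrightarrow>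
           F (x0, Q *v xb) (y0, Q *v yb) = F (x0, xb) (y0, yb)))"

definition fund_matrix :: "('n::finite pt \<Rightarrow> 'n pt \<Rightarrow> real) \<Rightarrow> 'n pt \<Rightarrow> 'n pt \<Rightarrow> real^'n option^'n option" where
  "fund_matrix F x y = (\<chi> A B. fund_tensor F x y A B)"

definition geod_coeff :: "('n::finite pt \<Rightarrow> 'n pt \<Rightarrow> real) \<Rightarrow> 'n option \<Rightarrow> 'n pt \<Rightarrow> 'n pt \<Rightarrow> real" where
  "geod_coeff F A x y =
     (let F2 = (\<lambda>x y. (F x y)\<^sup>2); ginv = matrix_inv (fund_matrix F x y) in
      1/4 * (\<Sum>B\<in>UNIV. ginv $ A $ B *
        ((\<Sum>C\<in>UNIV. px C (py B F2) x y * coord y C) - px B F2 x y)))"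

text \<open>Douglas curvature D^A_{BCD}, with n = CARD('n) (so the manifold has dimension n+1).\<close>

definition douglas :: "('n::finite pt \<Rightarrow> 'n pt \<Rightarrow> real) \<Rightarrow> 'n option \<Rightarrow> 'n option \<Rightarrow> 'n option \<Rightarrow> 'n option \<Rightarrow> 'n pt \<Rightarrow> 'n pt \<Rightarrow> real" where
  "douglas F A B C D x y =
     py B (py C (py D (\<lambda>x y. geod_coeff F A x y
        - 1 / (real CARD('n) + 2) * (\<Sum>E\<in>UNIV. py E (geod_coeff F E) x y) * coord y A))) x y"

definition douglas_vanishes :: "'n::finite pt set \<Rightarrow> ('n pt \<Rightarrow> 'n pt \<Rightarrow> real) \<Rightarrow> bool" where
  "douglas_vanishes M F \<longleftrightarrow>
     (\<forall>x\<in>M. \<forall>y. y \<noteq> 0 \<longrightarrow> (\<forall>A B C D. douglas F A B C D x y = 0))"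

definition Fex :: "'n::finite pt \<Rightarrow> 'n pt \<Rightarrow> real" where
  "Fex x y = (case x of (x0, xb) \<Rightarrow> case y of (y0, yb) \<Rightarrow>
     sqrt ((1 + (norm xb)\<^sup>2) * (norm yb)\<^sup>2 - (xb \<bullet> yb)\<^sup>2 + exp x0 * y0\<^sup>2)
     + (xb \<bullet> yb) / (1 + (norm xb)\<^sup>2))"

end

theory Submission
  imports Defs
begin

text \<open>Write \<open>F = \<alpha> + \<beta>\<close> with \<open>\<beta> = \<langle>xb,yb\<rangle> / (1 + |xb|\<^sup>2)\<close> and \<open>\<alpha>\<^sup>2 = a\<^sub>x(y,y)\<close> for
  the symmetric form \<open>a\<^sub>x(v,w) = (1 + |xb|\<^sup>2) \<langle>vb,wb\<rangle> - \<langle>xb,vb\<rangle> \<langle>xb,wb\<rangle> + exp x0 v0 w0\<close>.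
  By Cauchy-Schwarz \<open>a\<^sub>x\<close> is positive definite and \<open>|\<beta>| < \<alpha>\<close>, so \<open>F > 0\<close>; the second
  derivative of \<open>F\<^sup>2/2\<close> in direction \<open>v\<close> is \<open>(\<partial>\<^sub>vF)\<^sup>2 + F a\<^sub>x(\<eta>,\<eta>)/\<alpha>\<close>, where \<open>\<eta>\<close> is the
  \<open>a\<^sub>x\<close>-orthogonal projection of \<open>v\<close> away from \<open>y\<close>, hence \<open>F\<close> is strongly convex.

  Solving the linear system that defines the geodesic coefficients gives \<open>G = \<Gamma> + P y\<close>,
  with \<open>\<Gamma>\<close> quadratic in \<open>y\<close> and \<open>P\<close> positively homogeneous of degree one. Euler's relation
  gives \<open>\<Sum>\<^sub>E \<partial>(P y\<^sup>E)/\<partial>y\<^sup>E = (n + 2) P\<close>, so in the Douglas curvature the \<open>P\<close>-terms cancel: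
  it is the third \<open>y\<close>-derivative of \<open>\<Gamma>\<^sup>A - (\<Sum>\<^sub>E \<partial>\<Gamma>\<^sup>E/\<partial>y\<^sup>E) y\<^sup>A / (n + 2)\<close>, a
  quadratic polynomial in \<open>y\<close>, hence zero.\<close>

lemma sum_UNIV_option:
  "(\<Sum>A\<in>(UNIV::'a::finite option set). f A) = f None + (\<Sum>i\<in>UNIV. f (Some i))"
  by (simp add: UNIV_option_conv sum.reindex)

lemma coord_None [simp]: "coord v None = fst v"
  and coord_Some [simp]: "coord v (Some i) = snd v $ i"
  and cbasis_None [simp]: "cbasis None = (1, 0)"
  and cbasis_Some [simp]: "cbasis (Some i) = (0, axis i 1)"
  by (simp_all add: coord_def cbasis_def)

lemma coord_add [simp]: "coord (v + w) A = coord v A + coord w A"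
  and coord_scaleR [simp]: "coord (c *\<^sub>R v) A = c * coord v A"
  by (cases A; simp)+

lemma coord_cbasis: "coord (cbasis A) B = (if A = B then 1 else 0)"
  by (cases A; cases B) (auto simp: axis_def)

lemma sum_coord_scaleR_cbasis: "(\<Sum>A\<in>UNIV. coord v A *\<^sub>R cbasis A) = (v::'n::finite pt)"
proof -
  have "(\<Sum>A\<in>UNIV. coord v A *\<^sub>R cbasis A) = (fst v, \<Sum>i\<in>UNIV. snd v $ i *\<^sub>R axis i 1)"
    by (simp add: sum_UNIV_option prod_eq_iff fst_sum snd_sum)
  also have "\<dots> = v"
    using basis_expansion[of "snd v"] by (simp add: scalar_mult_eq_scaleR)
  finally show ?thesis .
qed

lemma linear_sum_coord:
  assumes "linear (f::'n::finite pt \<Rightarrow> real)"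
  shows "(\<Sum>A\<in>UNIV. f (cbasis A) * coord v A) = f v"
proof -
  have "f v = f (\<Sum>A\<in>UNIV. coord v A *\<^sub>R cbasis A)" by (simp add: sum_coord_scaleR_cbasis)
  also have "\<dots> = (\<Sum>A\<in>UNIV. coord v A * f (cbasis A))"
    using assms by (simp add: linear_sum linear_scale)
  finally show ?thesis by (simp add: mult.commute)
qed

definition pt_of :: "('n::finite option \<Rightarrow> real) \<Rightarrow> 'n pt" where
  "pt_of \<xi> = (\<xi> None, \<chi> i. \<xi> (Some i))"

lemma coord_pt_of [simp]: "coord (pt_of \<xi>) = \<xi>"
proof
  show "coord (pt_of \<xi>) A = \<xi> A" for A by (cases A) (auto simp: pt_of_def)
qed

lemma pt_of_coord [simp]: "pt_of (coord v) = v"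
  by (simp add: pt_of_def vec_eq_iff prod_eq_iff)

lemma pt_of_eq_0_iff: "pt_of \<xi> = 0 \<longleftrightarrow> \<xi> = (\<lambda>_. 0)"
proof
  assume "pt_of \<xi> = 0"
  then have "coord (pt_of \<xi>) = coord 0" by simp
  then show "\<xi> = (\<lambda>_. 0)" by (auto simp: coord_def split: option.split)
qed (simp add: pt_of_def zero_prod_def vec_eq_iff)

lemma eventually_line_in_open:
  fixes y v :: "'a::real_normed_vector"
  assumes "open S" "y \<in> S"
  shows "eventually (\<lambda>\<tau>::real. y + \<tau> *\<^sub>R v \<in> S) (nhds 0)"
proof -
  have "((\<lambda>\<tau>::real. y + \<tau> *\<^sub>R v) \<longlongrightarrow> y + 0 *\<^sub>R v) (nhds 0)"
    by (intro tendsto_intros) (simp add: filterlim_ident)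
  then have "((\<lambda>\<tau>::real. y + \<tau> *\<^sub>R v) \<longlongrightarrow> y) (nhds 0)" by simp
  from topological_tendstoD[OF this assms] show ?thesis .
qed

lemma deriv_line_cong_open:
  fixes y v :: "'a::real_normed_vector"
  assumes "open S" "y \<in> S" "\<And>z. z \<in> S \<Longrightarrow> f z = g z"
  shows "deriv (\<lambda>\<tau>. f (y + \<tau> *\<^sub>R v)) 0 = deriv (\<lambda>\<tau>. g (y + \<tau> *\<^sub>R v)) 0"
  by (rule deriv_cong_ev[OF eventually_mono[OF eventually_line_in_open[OF assms(1,2), of v]]])
     (auto simp: assms(3))

lemma py_cong_nonzero:
  assumes "y \<noteq> 0" "\<And>z. z \<noteq> 0 \<Longrightarrow> f x z = g x z"
  shows "py A f x y = py A g x y"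
  unfolding py_def
  by (rule deriv_line_cong_open[of "UNIV - {0}"]) (auto simp: assms open_Diff)

lemma has_derivative_imp_line_deriv:
  assumes "(g has_derivative g') (at y)"
  shows "((\<lambda>\<tau>. g (y + \<tau> *\<^sub>R v)) has_real_derivative g' v) (at 0)"
proof -
  have "((\<lambda>\<tau>::real. y + \<tau> *\<^sub>R v) has_derivative (\<lambda>h. h *\<^sub>R v)) (at 0)"
    by (auto intro!: derivative_eq_intros)
  from has_derivative_compose[OF this] assms
  have "((\<lambda>\<tau>. g (y + \<tau> *\<^sub>R v)) has_derivative (\<lambda>h. g' (h *\<^sub>R v))) (at 0)" by simp
  moreover have "(\<lambda>h. g' (h *\<^sub>R v)) = (\<lambda>h. g' v * h)"
    using linear_scale[OF has_derivative_linear[OF assms]] by (auto simp: mult.commute)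
  ultimately show ?thesis by (simp add: has_field_derivative_def)
qed

lemma has_derivative_homogeneous_Euler:
  fixes g :: "'a::real_normed_vector \<Rightarrow> real"
  assumes d: "(g has_derivative g') (at y)" and hom: "\<And>c. c > 0 \<Longrightarrow> g (c *\<^sub>R y) = c * g y"
  shows "g' y = g y"
proof -
  have "((\<lambda>\<tau>. (1 + \<tau>) * g y) has_real_derivative g y) (at 0)"
    by (auto intro!: derivative_eq_intros)
  then have "((\<lambda>\<tau>. g (y + \<tau> *\<^sub>R y)) has_real_derivative g y) (at 0)"
  proof (rule has_field_derivative_transform_within_open[where S="{-1<..}"])
    fix \<tau> :: real assume "\<tau> \<in> {-1<..}"
    then show "(1 + \<tau>) * g y = g (y + \<tau> *\<^sub>R y)"
      using hom[of "1 + \<tau>"] by (simp add: algebra_simps)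
  qed auto
  with has_derivative_imp_line_deriv[OF d, of y] show ?thesis
    by (rule DERIV_unique)
qed

inductive smooth_expr :: "'a::real_normed_vector set \<Rightarrow> ('a \<Rightarrow> real) \<Rightarrow> bool" for U where
  const: "smooth_expr U (\<lambda>z. c)"
| linear: "bounded_linear l \<Longrightarrow> smooth_expr U l"
| add: "smooth_expr U f \<Longrightarrow> smooth_expr U g \<Longrightarrow> smooth_expr U (\<lambda>z. f z + g z)"
| mult: "smooth_expr U f \<Longrightarrow> smooth_expr U g \<Longrightarrow> smooth_expr U (\<lambda>z. f z * g z)"
| exp: "smooth_expr U f \<Longrightarrow> smooth_expr U (\<lambda>z. exp (f z))"
| sqrt: "smooth_expr U f \<Longrightarrow> (\<And>z. z \<in> U \<Longrightarrow> f z > 0) \<Longrightarrow> smooth_expr U (\<lambda>z. sqrt (f z))"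
| inverse: "smooth_expr U f \<Longrightarrow> (\<And>z. z \<in> U \<Longrightarrow> f z \<noteq> 0) \<Longrightarrow> smooth_expr U (\<lambda>z. inverse (f z))"

lemma smooth_expr_has_derivative:
  assumes "smooth_expr U f" "z \<in> U"
  shows "\<exists>D. (f has_derivative D) (at z)"
  using assms
proof (induction rule: smooth_expr.induct)
  case (linear l)
  then show ?case using bounded_linear_imp_has_derivative by blast
next
  case (add f g)
  then show ?case using has_derivative_add by blast
next
  case (mult f g)
  then show ?case using has_derivative_mult by blast
next
  case (exp f)
  then show ?case using DERIV_compose_FDERIV[OF DERIV_exp] by blast
next
  case (sqrt f)
  then show ?case using DERIV_compose_FDERIV[OF DERIV_real_sqrt] by blast
next
  case (inverse f)
  then show ?case using DERIV_compose_FDERIV[OF DERIV_inverse] by blast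
qed (auto intro: has_derivative_const)

lemma smooth_expr_line_deriv:
  assumes "smooth_expr U f"
  shows "\<exists>g. smooth_expr U g \<and> (\<forall>z\<in>U. ((\<lambda>\<tau>. f (z + \<tau> *\<^sub>R v)) has_real_derivative g z) (at 0))"
  using assms
proof (induction rule: smooth_expr.induct)
  case (const c)
  show ?case by (auto intro!: exI[of _ "\<lambda>z. 0"] smooth_expr.const derivative_eq_intros)
next
  case (linear l)
  have "((\<lambda>\<tau>. l (z + \<tau> *\<^sub>R v)) has_real_derivative l v) (at 0)" for z
    using has_derivative_imp_line_deriv[OF bounded_linear_imp_has_derivative[OF linear]] .
  then show ?case using smooth_expr.const by blast
next
  case (add f g)
  then obtain f' g' where "smooth_expr U f'" "smooth_expr U g'"
    "\<forall>z\<in>U. ((\<lambda>\<tau>. f (z + \<tau> *\<^sub>R v)) has_real_derivative f' z) (at 0)"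
    "\<forall>z\<in>U. ((\<lambda>\<tau>. g (z + \<tau> *\<^sub>R v)) has_real_derivative g' z) (at 0)" by blast
  then show ?case
    by (intro exI[of _ "\<lambda>z. f' z + g' z"]) (auto intro!: smooth_expr.add DERIV_add)
next
  case (mult f g)
  then obtain f' g' where "smooth_expr U f'" "smooth_expr U g'"
    "\<forall>z\<in>U. ((\<lambda>\<tau>. f (z + \<tau> *\<^sub>R v)) has_real_derivative f' z) (at 0)"
    "\<forall>z\<in>U. ((\<lambda>\<tau>. g (z + \<tau> *\<^sub>R v)) has_real_derivative g' z) (at 0)" by blast
  with mult.hyps show ?case
    by (intro exI[of _ "\<lambda>z. f' z * g z + f z * g' z"])
       (auto intro!: smooth_expr.add smooth_expr.mult DERIV_cong[OF DERIV_mult])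
next
  case (exp f)
  then obtain f' where "smooth_expr U f'"
    "\<forall>z\<in>U. ((\<lambda>\<tau>. f (z + \<tau> *\<^sub>R v)) has_real_derivative f' z) (at 0)" by blast
  with exp.hyps show ?case
    by (intro exI[of _ "\<lambda>z. exp (f z) * f' z"])
       (auto intro!: smooth_expr.mult smooth_expr.exp DERIV_cong[OF DERIV_chain2[OF DERIV_exp]])
next
  case (sqrt f)
  then obtain f' where f': "smooth_expr U f'"
    "\<forall>z\<in>U. ((\<lambda>\<tau>. f (z + \<tau> *\<^sub>R v)) has_real_derivative f' z) (at 0)" by blast
  have "smooth_expr U (\<lambda>z. f' z * inverse (2 * sqrt (f z)))"
  proof (intro smooth_expr.mult smooth_expr.inverse smooth_expr.const smooth_expr.sqrt f'(1) sqrt.hyps)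
    show "z \<in> U \<Longrightarrow> 2 * sqrt (f z) \<noteq> 0" for z using sqrt.hyps(2)[of z] by simp
  qed
  moreover have "((\<lambda>\<tau>. sqrt (f (z + \<tau> *\<^sub>R v))) has_real_derivative f' z * inverse (2 * sqrt (f z))) (at 0)"
    if "z \<in> U" for z
    using DERIV_chain2[OF DERIV_real_sqrt f'(2)[rule_format, OF that]] sqrt.hyps(2)[OF that]
    by (simp add: field_simps)
  ultimately show ?case by blast
next
  case (inverse f)
  then obtain f' where f': "smooth_expr U f'"
    "\<forall>z\<in>U. ((\<lambda>\<tau>. f (z + \<tau> *\<^sub>R v)) has_real_derivative f' z) (at 0)" by blast
  have "smooth_expr U (\<lambda>z. (-1) * (f' z * (inverse (f z) * inverse (f z))))"
    using inverse.hyps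
    by (intro smooth_expr.mult smooth_expr.const smooth_expr.inverse f'(1))
  moreover have "((\<lambda>\<tau>. inverse (f (z + \<tau> *\<^sub>R v))) has_real_derivative
      (-1) * (f' z * (inverse (f z) * inverse (f z)))) (at 0)" if "z \<in> U" for z
    using DERIV_chain2[OF DERIV_inverse f'(2)[rule_format, OF that]] inverse.hyps(2)[OF that]
    by (simp add: field_simps)
  ultimately show ?case by blast
qed

lemma smooth_expr_smooth_on:
  assumes U: "open U" and f: "smooth_expr U f"
  shows "smooth_on U f"
proof -
  have iter: "\<exists>g. smooth_expr U g \<and> (\<forall>z\<in>U. iter_dirder vs f z = g z)" for vs
  proof (induction vs)
    case (Cons v vs)
    then obtain g where g: "smooth_expr U g" "\<forall>z\<in>U. iter_dirder vs f z = g z" by blast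
    obtain h where h: "smooth_expr U h" "\<forall>z\<in>U. ((\<lambda>\<tau>. g (z + \<tau> *\<^sub>R v)) has_real_derivative h z) (at 0)"
      using smooth_expr_line_deriv[OF g(1)] by blast
    have "iter_dirder (v # vs) f z = h z" if "z \<in> U" for z
    proof -
      have "iter_dirder (v # vs) f z = deriv (\<lambda>\<tau>. g (z + \<tau> *\<^sub>R v)) 0"
        unfolding iter_dirder.simps dirder_def
        by (rule deriv_line_cong_open[OF U that]) (use g(2) in auto)
      also have "\<dots> = h z" using h(2) that by (simp add: DERIV_imp_deriv)
      finally show ?thesis .
    qed
    then show ?case using h(1) by blast
  qed (use f in auto)
  have "iter_dirder vs f differentiable_on U" for vs
    unfolding differentiable_on_def
  proof
    fix z assume z: "z \<in> U"
    obtain g where g: "smooth_expr U g" "\<forall>z\<in>U. iter_dirder vs f z = g z" using iter by blast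
    obtain D where "(g has_derivative D) (at z)" using smooth_expr_has_derivative[OF g(1) z] by blast
    then have "(iter_dirder vs f has_derivative D) (at z)"
      by (rule has_derivative_transform_within_open[OF _ U z]) (use g(2) in auto)
    then show "iter_dirder vs f differentiable at z within U"
      unfolding differentiable_def using has_derivative_at_withinI by blast
  qed
  then show ?thesis using U by (simp add: smooth_on_def)
qed

lemma smooth_expr_sum:
  "finite S \<Longrightarrow> (\<And>i. i \<in> S \<Longrightarrow> smooth_expr U (f i)) \<Longrightarrow> smooth_expr U (\<lambda>z. \<Sum>i\<in>S. f i z)"
  by (induction S rule: finite_induct) (auto intro: smooth_expr.intros)

lemma smooth_expr_diff: "smooth_expr U f \<Longrightarrow> smooth_expr U g \<Longrightarrow> smooth_expr U (\<lambda>z. f z - g z)"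
  using smooth_expr.add[of U f "\<lambda>z. (-1) * g z"] smooth_expr.mult[OF smooth_expr.const[of U "-1"], of g]
  by simp

lemma smooth_expr_divide:
  "smooth_expr U f \<Longrightarrow> smooth_expr U g \<Longrightarrow> (\<And>z. z \<in> U \<Longrightarrow> g z \<noteq> 0) \<Longrightarrow> smooth_expr U (\<lambda>z. f z / g z)"
  using smooth_expr.mult[OF _ smooth_expr.inverse[of U g]] by (simp add: divide_inverse)

lemma smooth_expr_inner:
  fixes l m :: "'a::real_normed_vector \<Rightarrow> real ^ 'n::finite"
  assumes "bounded_linear l" "bounded_linear m"
  shows "smooth_expr U (\<lambda>z. l z \<bullet> m z)"
proof -
  have "smooth_expr U (\<lambda>z. \<Sum>i\<in>UNIV. l z $ i * m z $ i)"
    by (intro smooth_expr_sum smooth_expr.mult smooth_expr.linear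
        bounded_linear_compose[OF bounded_linear_vec_nth] assms) simp
  then show ?thesis by (simp add: inner_vec_def)
qed

section \<open>Polynomials in the fibre coordinates\<close>

inductive poly_in_y :: "nat \<Rightarrow> ('n::finite pt \<Rightarrow> 'n pt \<Rightarrow> real) \<Rightarrow> bool" where
  const: "poly_in_y k (\<lambda>x y. c x)"
| add: "poly_in_y k f \<Longrightarrow> poly_in_y k g \<Longrightarrow> poly_in_y k (\<lambda>x y. f x y + g x y)"
| mult_coord: "poly_in_y k f \<Longrightarrow> poly_in_y (Suc k) (\<lambda>x y. f x y * coord y A)"

lemma poly_in_y_cmult: "poly_in_y k f \<Longrightarrow> poly_in_y k (\<lambda>x y. c x * f x y)"
proof (induction rule: poly_in_y.induct)
  case (const k d)
  then show ?case using poly_in_y.const[of k "\<lambda>x. c x * d x"] by simp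
next
  case (add k f g)
  then show ?case using poly_in_y.add[OF add.IH] by (simp add: distrib_left)
next
  case (mult_coord k f A)
  then show ?case using poly_in_y.mult_coord[OF mult_coord.IH, of A] by (simp add: mult.assoc)
qed

lemma poly_in_y_diff: "poly_in_y k f \<Longrightarrow> poly_in_y k g \<Longrightarrow> poly_in_y k (\<lambda>x y. f x y - g x y)"
  using poly_in_y.add[of k f "\<lambda>x y. (-1) * g x y"] poly_in_y_cmult[of k g "\<lambda>x. -1"] by simp

lemma poly_in_y_mono: "poly_in_y k f \<Longrightarrow> k \<le> m \<Longrightarrow> poly_in_y m f"
proof (induction arbitrary: m rule: poly_in_y.induct)
  case (mult_coord k f A)
  then obtain m' where "m = Suc m'" "k \<le> m'" by (cases m) auto
  then show ?case using mult_coord.IH poly_in_y.mult_coord by blast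
qed (auto intro: poly_in_y.intros)

lemma poly_in_y_mult: "poly_in_y a f \<Longrightarrow> poly_in_y b g \<Longrightarrow> poly_in_y (a + b) (\<lambda>x y. f x y * g x y)"
proof (induction rule: poly_in_y.induct)
  case (const k c)
  then show ?case using poly_in_y_mono[OF poly_in_y_cmult[OF const, of c], of "k + b"] by simp
next
  case (add k f1 f2)
  then show ?case using poly_in_y.add[OF add.IH] by (simp add: distrib_right)
next
  case (mult_coord k f A)
  have "poly_in_y (Suc (k + b)) (\<lambda>x y. (f x y * g x y) * coord y A)"
    by (rule poly_in_y.mult_coord[OF mult_coord.IH[OF mult_coord.prems]])
  then show ?case by (simp add: algebra_simps)
qed

lemma poly_in_y_sum:
  "finite S \<Longrightarrow> (\<And>i. i \<in> S \<Longrightarrow> poly_in_y k (f i)) \<Longrightarrow> poly_in_y k (\<lambda>x y. \<Sum>i\<in>S. f i x y)"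
proof (induction S rule: finite_induct)
  case empty
  then show ?case using poly_in_y.const[of k "\<lambda>x. 0"] by simp
next
  case (insert i S)
  then show ?case using poly_in_y.add[of k "f i" "\<lambda>x y. \<Sum>i\<in>S. f i x y"] by simp
qed

lemma poly_in_y_0_const: "poly_in_y k f \<Longrightarrow> k = 0 \<Longrightarrow> f x y = f x y'"
  by (induction rule: poly_in_y.induct) auto

lemma poly_in_y_line_deriv:
  "poly_in_y k f \<Longrightarrow>
     \<exists>g. poly_in_y (k - 1) g \<and> (\<forall>x y. ((\<lambda>\<tau>. f x (y + \<tau> *\<^sub>R v)) has_real_derivative g x y) (at 0))"
proof (induction rule: poly_in_y.induct)
  case (const k c)
  show ?case by (rule exI[of _ "\<lambda>x y. 0"]) (auto intro: poly_in_y.const[of _ "\<lambda>x. 0", simplified])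
next
  case (add k f1 f2)
  then obtain g1 g2 where "poly_in_y (k - 1) g1" "poly_in_y (k - 1) g2"
    "\<forall>x y. ((\<lambda>\<tau>. f1 x (y + \<tau> *\<^sub>R v)) has_real_derivative g1 x y) (at 0)"
    "\<forall>x y. ((\<lambda>\<tau>. f2 x (y + \<tau> *\<^sub>R v)) has_real_derivative g2 x y) (at 0)" by blast
  then show ?case
    by (intro exI[of _ "\<lambda>x y. g1 x y + g2 x y"]) (auto intro!: poly_in_y.add DERIV_add)
next
  case (mult_coord k f A)
  then obtain g where g: "poly_in_y (k - 1) g"
    "\<forall>x y. ((\<lambda>\<tau>. f x (y + \<tau> *\<^sub>R v)) has_real_derivative g x y) (at 0)" by blast
  have vf: "poly_in_y k (\<lambda>x y. coord v A * f x y)"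
    using poly_in_y_cmult[OF mult_coord.hyps, of "\<lambda>x. coord v A"] by simp
  show ?case
  proof (cases "k = 0")
    case True
    then have "f x (y + \<tau> *\<^sub>R v) = f x y" for x y \<tau>
      using poly_in_y_0_const[OF mult_coord.hyps] by blast
    then have "((\<lambda>\<tau>. f x (y + \<tau> *\<^sub>R v) * coord (y + \<tau> *\<^sub>R v) A)
        has_real_derivative coord v A * f x y) (at 0)" for x y
      by (auto intro!: derivative_eq_intros)
    with vf True show ?thesis by auto
  next
    case False
    then have "poly_in_y k (\<lambda>x y. g x y * coord y A)"
      using poly_in_y.mult_coord[OF g(1), of A] by simp
    then have "poly_in_y k (\<lambda>x y. g x y * coord y A + coord v A * f x y)"
      using poly_in_y.add vf by blast
    moreover have "((\<lambda>\<tau>. f x (y + \<tau> *\<^sub>R v) * coord (y + \<tau> *\<^sub>R v) A)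
        has_real_derivative g x y * coord y A + coord v A * f x y) (at 0)" for x y
      by (auto intro!: derivative_eq_intros g(2)[rule_format])
    ultimately show ?thesis by auto
  qed
qed

lemma poly_in_y_has_py:
  assumes "poly_in_y k f"
  shows "((\<lambda>\<tau>. f x (y + \<tau> *\<^sub>R cbasis A)) has_real_derivative py A f x y) (at 0)"
proof -
  obtain g where "((\<lambda>\<tau>. f x (y + \<tau> *\<^sub>R cbasis A)) has_real_derivative g x y) (at 0)"
    using poly_in_y_line_deriv[OF assms] by blast
  moreover from this have "py A f x y = g x y" by (simp add: py_def DERIV_imp_deriv)
  ultimately show ?thesis by simp
qed

lemma poly_in_y_py: "poly_in_y (Suc k) f \<Longrightarrow> poly_in_y k (py A f)"
proof -
  assume "poly_in_y (Suc k) f"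
  from poly_in_y_line_deriv[OF this, of "cbasis A"] obtain g where
    "poly_in_y k g" "\<forall>x y. ((\<lambda>\<tau>. f x (y + \<tau> *\<^sub>R cbasis A)) has_real_derivative g x y) (at 0)"
    by auto
  moreover from this(2) have "py A f = g" by (simp add: py_def DERIV_imp_deriv fun_eq_iff)
  ultimately show ?thesis by simp
qed

lemma py_poly_in_y_0: "poly_in_y 0 f \<Longrightarrow> py A f x y = 0"
proof -
  assume "poly_in_y 0 f"
  then have "(\<lambda>\<tau>. f x (y + \<tau> *\<^sub>R cbasis A)) = (\<lambda>\<tau>. f x y)"
    using poly_in_y_0_const by blast
  then show ?thesis by (simp add: py_def)
qed

section \<open>The metric as \<open>\<alpha> + \<beta>\<close>\<close>

definition rsq :: "'n::finite pt \<Rightarrow> real" where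
  "rsq x = 1 + snd x \<bullet> snd x"

definition xdot :: "'n::finite pt \<Rightarrow> 'n pt \<Rightarrow> real" where
  "xdot x y = snd x \<bullet> snd y"

definition ysq :: "'n::finite pt \<Rightarrow> real" where
  "ysq y = snd y \<bullet> snd y"

definition expx0 :: "'n::finite pt \<Rightarrow> real" where
  "expx0 x = exp (fst x)"

definition abil :: "'n::finite pt \<Rightarrow> 'n pt \<Rightarrow> 'n pt \<Rightarrow> real" where
  "abil x v w = rsq x * (snd v \<bullet> snd w) - (snd x \<bullet> snd v) * (snd x \<bullet> snd w) + expx0 x * fst v * fst w"

definition alpha_sq :: "'n::finite pt \<Rightarrow> 'n pt \<Rightarrow> real" where
  "alpha_sq x y = abil x y y"

definition alpha :: "'n::finite pt \<Rightarrow> 'n pt \<Rightarrow> real" where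
  "alpha x y = sqrt (alpha_sq x y)"

lemma rsq_ge1: "rsq x \<ge> 1"
  by (simp add: rsq_def)

lemma rsq_pos: "rsq x > 0"
  using rsq_ge1[of x] by linarith

lemma expx0_pos: "expx0 x > 0"
  by (simp add: expx0_def)

lemma Fex_alpha_beta: "Fex x y = alpha x y + xdot x y / rsq x"
  by (cases x, cases y)
     (simp add: Fex_def alpha_def alpha_sq_def abil_def rsq_def xdot_def expx0_def power2_norm_eq_inner,
      simp add: power2_eq_square mult.assoc)

lemma abil_diag_ge: "abil x v v \<ge> snd v \<bullet> snd v + expx0 x * (fst v)^2"
proof -
  have "(snd x \<bullet> snd v)^2 \<le> (snd x \<bullet> snd x) * (snd v \<bullet> snd v)" by (rule Cauchy_Schwarz_ineq)
  then show ?thesis by (simp add: abil_def rsq_def power2_eq_square algebra_simps)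
qed

lemma abil_diag_pos:
  assumes "v \<noteq> 0"
  shows "abil x v v > 0"
proof -
  have "snd v \<bullet> snd v + expx0 x * (fst v)^2 > 0"
  proof (cases "snd v = 0")
    case True
    with assms have "fst v \<noteq> 0" by (simp add: prod_eq_iff)
    with True expx0_pos[of x] show ?thesis by simp
  next
    case False
    then show ?thesis using expx0_pos[of x]
      by (metis add_pos_nonneg inner_gt_zero_iff mult_nonneg_nonneg less_le zero_le_power2)
  qed
  with abil_diag_ge[where x=x and v=v] show ?thesis by linarith
qed

lemma ysq_le_alpha_sq: "ysq y \<le> alpha_sq x y"
proof -
  have "0 \<le> expx0 x * (fst y)^2" using expx0_pos[of x] by simp
  then show ?thesis using abil_diag_ge[where x=x and v=y] by (simp add: alpha_sq_def ysq_def)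
qed

lemma alpha_sq_nonneg: "alpha_sq x y \<ge> 0"
  using ysq_le_alpha_sq[of y x] by (simp add: ysq_def order_trans[OF inner_ge_zero])

lemma alpha_sq_pos: "y \<noteq> 0 \<Longrightarrow> alpha_sq x y > 0"
  by (simp add: alpha_sq_def abil_diag_pos)

lemma alpha_pos: "y \<noteq> 0 \<Longrightarrow> alpha x y > 0"
  by (simp add: alpha_def alpha_sq_pos)

lemma alpha_squared: "(alpha x y)^2 = alpha_sq x y"
  using alpha_sq_nonneg[of x y] by (simp add: alpha_def)

lemma abs_beta_less_alpha:
  assumes y: "y \<noteq> 0"
  shows "\<bar>xdot x y / rsq x\<bar> < alpha x y"
proof -
  have "(xdot x y)^2 \<le> (rsq x - 1) * ysq y"
    using Cauchy_Schwarz_ineq[of "snd x" "snd y"] by (simp add: xdot_def rsq_def ysq_def)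
  also have "\<dots> \<le> (rsq x - 1) * alpha_sq x y"
    using rsq_ge1[of x] by (intro mult_left_mono ysq_le_alpha_sq) simp
  also have "\<dots> < (rsq x)^2 * alpha_sq x y"
  proof (rule mult_strict_right_mono)
    have "rsq x \<le> (rsq x)^2" using rsq_ge1[of x] by (simp add: power2_eq_square)
    then show "rsq x - 1 < (rsq x)^2" by linarith
  qed (rule alpha_sq_pos[OF y])
  also have "\<dots> = (rsq x * alpha x y)^2"
    by (simp only: power_mult_distrib alpha_squared)
  finally have "\<bar>xdot x y\<bar>^2 < (rsq x * alpha x y)^2" by simp
  then have "\<bar>xdot x y\<bar> < rsq x * alpha x y"
    by (rule power2_less_imp_less) (use rsq_pos[of x] alpha_pos[OF y, of x] in simp)
  then show ?thesis
    using rsq_pos[of x] by (simp add: abs_div pos_divide_less_eq mult.commute)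
qed

lemma Fex_pos: "y \<noteq> 0 \<Longrightarrow> Fex x y > 0"
  using abs_beta_less_alpha[of y x] unfolding Fex_alpha_beta abs_less_iff by linarith

lemma Fex_nonneg: "Fex x y \<ge> 0"
proof (cases "y = 0")
  case True
  then show ?thesis by (simp add: Fex_alpha_beta alpha_def alpha_sq_def abil_def xdot_def)
qed (simp add: Fex_pos less_imp_le)

lemma abil_diag_scaleR: "abil x (c *\<^sub>R v) (c *\<^sub>R v) = c^2 * abil x v v"
  by (simp add: abil_def power2_eq_square algebra_simps)

lemma Fex_homogeneous: "c > 0 \<Longrightarrow> Fex x (c *\<^sub>R y) = c * Fex x y"
  by (simp add: Fex_alpha_beta alpha_def alpha_sq_def abil_diag_scaleR real_sqrt_mult xdot_def
      algebra_simps)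

text \<open>\<open>dFy x y v\<close> and \<open>dFx x y c\<close> are the derivatives of \<open>F\<close> at \<open>(x,y)\<close> along
  \<open>v\<close> in the fibre and along \<open>c\<close> in the base; \<open>dF2y\<close>, \<open>dF2x\<close>, \<open>ddF2y\<close>, \<open>ddF2xy\<close> are the
  corresponding first and second derivatives of \<open>F\<^sup>2\<close>, with the directions first so that
  \<open>py B (\<lambda>x y. F x y\<^sup>2) = dF2y (cbasis B)\<close>.\<close>

definition dFy :: "'n::finite pt \<Rightarrow> 'n pt \<Rightarrow> 'n pt \<Rightarrow> real" where
  "dFy x y v = abil x y v / alpha x y + (snd x \<bullet> snd v) / rsq x"

definition dF2y :: "'n::finite pt \<Rightarrow> 'n pt \<Rightarrow> 'n pt \<Rightarrow> real" where
  "dF2y v x y = 2 * Fex x y * dFy x y v"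

definition ddF2y :: "'n::finite pt \<Rightarrow> 'n pt \<Rightarrow> 'n pt \<Rightarrow> 'n pt \<Rightarrow> real" where
  "ddF2y v w x y = 2 * dFy x y v * dFy x y w
     + 2 * Fex x y * (abil x v w / alpha x y - abil x y v * abil x y w / (alpha x y)^3)"

definition half_alpha_sq_dx :: "'n::finite pt \<Rightarrow> 'n pt \<Rightarrow> 'n pt \<Rightarrow> real" where
  "half_alpha_sq_dx x y c =
     (snd x \<bullet> snd c) * ysq y - xdot x y * (snd c \<bullet> snd y) + expx0 x * fst c * (fst y)^2 / 2"

definition beta_dx :: "'n::finite pt \<Rightarrow> 'n pt \<Rightarrow> 'n pt \<Rightarrow> real" where
  "beta_dx x y c = (snd c \<bullet> snd y) / rsq x - 2 * xdot x y * (snd x \<bullet> snd c) / (rsq x)^2"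

definition dFx :: "'n::finite pt \<Rightarrow> 'n pt \<Rightarrow> 'n pt \<Rightarrow> real" where
  "dFx x y c = half_alpha_sq_dx x y c / alpha x y + beta_dx x y c"

definition dF2x :: "'n::finite pt \<Rightarrow> 'n pt \<Rightarrow> 'n pt \<Rightarrow> real" where
  "dF2x c x y = 2 * Fex x y * dFx x y c"

definition abil_dx :: "'n::finite pt \<Rightarrow> 'n pt \<Rightarrow> 'n pt \<Rightarrow> 'n pt \<Rightarrow> real" where
  "abil_dx x y c w = 2 * (snd x \<bullet> snd c) * (snd y \<bullet> snd w) - (snd c \<bullet> snd y) * (snd x \<bullet> snd w)
     - xdot x y * (snd c \<bullet> snd w) + expx0 x * fst c * fst y * fst w"

definition ddF2xy :: "'n::finite pt \<Rightarrow> 'n pt \<Rightarrow> 'n pt \<Rightarrow> 'n pt \<Rightarrow> real" where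
  "ddF2xy c w x y = 2 * dFx x y c * dFy x y w
     + 2 * Fex x y * (abil_dx x y c w / alpha x y - abil x y w * half_alpha_sq_dx x y c / (alpha x y)^3
                     + (snd c \<bullet> snd w) / rsq x - 2 * (snd x \<bullet> snd w) * (snd x \<bullet> snd c) / (rsq x)^2)"

lemma abil_sym: "abil x v w = abil x w v"
  by (simp add: abil_def inner_commute algebra_simps)

lemma alpha_sq_eq: "alpha_sq x y = rsq x * ysq y - (xdot x y)^2 + expx0 x * (fst y)^2"
  by (simp add: alpha_sq_def abil_def ysq_def xdot_def power2_eq_square)

lemma alpha_sq_along_y: "alpha_sq x (y + \<tau> *\<^sub>R v) = alpha_sq x y + \<tau> * (2 * abil x y v) + \<tau>^2 * abil x v v"
  by (simp add: alpha_sq_def abil_def inner_add inner_commute power2_eq_square algebra_simps)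

lemma abil_along_y: "abil x (y + \<tau> *\<^sub>R v) w = abil x y w + \<tau> * abil x v w"
  by (simp add: abil_def inner_add algebra_simps)

lemma xdot_along_y: "xdot x (y + \<tau> *\<^sub>R v) = xdot x y + \<tau> * (snd x \<bullet> snd v)"
  by (simp add: xdot_def inner_add)

lemma has_real_derivative_sqrt_quadratic:
  assumes "p0 > 0"
  shows "((\<lambda>\<tau>::real. sqrt (p0 + \<tau> * p1 + \<tau>^2 * p2)) has_real_derivative p1 / (2 * sqrt p0)) (at 0)"
  using assms by (auto intro!: derivative_eq_intros simp: divide_simps)

lemma has_alpha_dy:
  assumes "y \<noteq> 0"
  shows "((\<lambda>\<tau>. alpha x (y + \<tau> *\<^sub>R v)) has_real_derivative abil x y v / alpha x y) (at 0)"
proof -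
  have e: "(\<lambda>\<tau>. alpha x (y + \<tau> *\<^sub>R v)) = (\<lambda>\<tau>. sqrt (alpha_sq x y + \<tau> * (2 * abil x y v) + \<tau>^2 * abil x v v))"
    by (simp add: alpha_def alpha_sq_along_y)
  have d: "abil x y v / alpha x y = 2 * abil x y v / (2 * sqrt (alpha_sq x y))" by (simp add: alpha_def)
  show ?thesis unfolding e d by (rule has_real_derivative_sqrt_quadratic[OF alpha_sq_pos[OF assms]])
qed

lemma has_Fex_dy:
  assumes "y \<noteq> 0"
  shows "((\<lambda>\<tau>. Fex x (y + \<tau> *\<^sub>R v)) has_real_derivative dFy x y v) (at 0)"
proof -
  note d = has_alpha_dy[OF assms, where x=x and v=v]
  have e: "(\<lambda>\<tau>. Fex x (y + \<tau> *\<^sub>R v)) = (\<lambda>\<tau>. alpha x (y + \<tau> *\<^sub>R v) + (xdot x y + \<tau> * (snd x \<bullet> snd v)) / rsq x)"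
    by (simp add: Fex_alpha_beta xdot_along_y)
  show ?thesis unfolding e using rsq_pos[of x]
    by (auto intro!: derivative_eq_intros d simp: dFy_def)
qed

lemma has_Fex_sq_dy:
  assumes "y \<noteq> 0"
  shows "((\<lambda>\<tau>. (Fex x (y + \<tau> *\<^sub>R v))^2) has_real_derivative dF2y v x y) (at 0)"
  using has_Fex_dy[OF assms, of x v] by (auto intro!: derivative_eq_intros simp: dF2y_def)

lemma has_dF2y_dy:
  assumes "y \<noteq> 0"
  shows "((\<lambda>\<tau>. dF2y w x (y + \<tau> *\<^sub>R v)) has_real_derivative ddF2y w v x y) (at 0)"
proof -
  have e: "(\<lambda>\<tau>. dF2y w x (y + \<tau> *\<^sub>R v)) = (\<lambda>\<tau>. 2 * Fex x (y + \<tau> *\<^sub>R v) *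
       ((abil x y w + \<tau> * abil x v w) / alpha x (y + \<tau> *\<^sub>R v) + (snd x \<bullet> snd w) / rsq x))"
    by (simp add: dF2y_def dFy_def abil_along_y)
  have ap: "alpha x y > 0" using alpha_pos[OF assms] .
  note d1 = has_Fex_dy[OF assms, where x=x and v=v]
  note d2 = has_alpha_dy[OF assms, where x=x and v=v]
  show ?thesis unfolding e
    using ap rsq_pos[of x] by (auto intro!: derivative_eq_intros d1 d2 simp: ddF2y_def dFy_def abil_sym power3_eq_cube field_simps)
qed

lemma rsq_along_x: "rsq (x + \<tau> *\<^sub>R c) = rsq x + \<tau> * (2 * (snd x \<bullet> snd c)) + \<tau>^2 * (snd c \<bullet> snd c)"
  by (simp add: rsq_def inner_add inner_commute power2_eq_square algebra_simps)

lemma xdot_along_x: "xdot (x + \<tau> *\<^sub>R c) y = xdot x y + \<tau> * (snd c \<bullet> snd y)"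
  by (simp add: xdot_def inner_add)

lemma expx0_along_x: "expx0 (x + \<tau> *\<^sub>R c) = exp (fst x + \<tau> * fst c)"
  by (simp add: expx0_def)

lemma inner_snd_along_x: "snd (x + \<tau> *\<^sub>R c) \<bullet> snd w = snd x \<bullet> snd w + \<tau> * (snd c \<bullet> snd w)"
  by (simp add: inner_add)

lemma abil_xdot: "abil x y w = rsq x * (snd y \<bullet> snd w) - xdot x y * (snd x \<bullet> snd w) + expx0 x * fst y * fst w"
  by (simp add: abil_def xdot_def)

lemma has_rsq_dx: "((\<lambda>\<tau>. rsq (x + \<tau> *\<^sub>R c)) has_real_derivative 2 * (snd x \<bullet> snd c)) (at 0)"
  unfolding rsq_along_x by (auto intro!: derivative_eq_intros)

lemma has_xdot_dx: "((\<lambda>\<tau>. xdot (x + \<tau> *\<^sub>R c) y) has_real_derivative (snd c \<bullet> snd y)) (at 0)"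
  unfolding xdot_along_x by (auto intro!: derivative_eq_intros)

lemma has_expx0_dx: "((\<lambda>\<tau>. expx0 (x + \<tau> *\<^sub>R c)) has_real_derivative expx0 x * fst c) (at 0)"
  unfolding expx0_along_x by (auto intro!: derivative_eq_intros simp: expx0_def)

lemma has_inner_snd_dx: "((\<lambda>\<tau>. snd (x + \<tau> *\<^sub>R c) \<bullet> snd w) has_real_derivative (snd c \<bullet> snd w)) (at 0)"
  unfolding inner_snd_along_x by (auto intro!: derivative_eq_intros)

lemma has_inner_line: "((\<lambda>\<tau>. (snd x + \<tau> *\<^sub>R snd c) \<bullet> w) has_real_derivative (snd c \<bullet> w)) (at 0)"
  by (auto intro!: derivative_eq_intros simp: inner_add)

lemma has_alpha_sq_dx: "((\<lambda>\<tau>. alpha_sq (x + \<tau> *\<^sub>R c) y) has_real_derivative 2 * half_alpha_sq_dx x y c) (at 0)"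
proof -
  note d1 = has_rsq_dx[where x=x and c=c] and d2 = has_xdot_dx[where x=x and c=c and y=y]
    and d3 = has_expx0_dx[where x=x and c=c]
  show ?thesis unfolding alpha_sq_eq
    by (auto intro!: derivative_eq_intros d1 d2 d3 simp: half_alpha_sq_dx_def xdot_def algebra_simps)
qed

lemma has_alpha_dx:
  assumes "y \<noteq> 0"
  shows "((\<lambda>\<tau>. alpha (x + \<tau> *\<^sub>R c) y) has_real_derivative half_alpha_sq_dx x y c / alpha x y) (at 0)"
proof -
  note d = has_alpha_sq_dx[where x=x and c=c and y=y]
  have p: "alpha_sq x y > 0" using alpha_sq_pos[OF assms] .
  show ?thesis unfolding alpha_def using p
    by (auto intro!: derivative_eq_intros d simp: divide_simps)
qed

lemma has_Fex_dx:
  assumes "y \<noteq> 0"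
  shows "((\<lambda>\<tau>. Fex (x + \<tau> *\<^sub>R c) y) has_real_derivative dFx x y c) (at 0)"
proof -
  note d1 = has_rsq_dx[where x=x and c=c] and d2 = has_xdot_dx[where x=x and c=c and y=y]
    and d3 = has_alpha_dx[OF assms, where x=x and c=c] and d4 = has_inner_line[where x=x and c=c and w="snd y"]
  show ?thesis unfolding Fex_alpha_beta using rsq_pos[of x]
    by (auto intro!: derivative_eq_intros d1 d2 d3 d4 simp: dFx_def beta_dx_def xdot_def power2_eq_square field_simps)
qed

lemma has_Fex_sq_dx:
  assumes "y \<noteq> 0"
  shows "((\<lambda>\<tau>. (Fex (x + \<tau> *\<^sub>R c) y)^2) has_real_derivative dF2x c x y) (at 0)"
  using has_Fex_dx[OF assms, of x c] by (auto intro!: derivative_eq_intros simp: dF2x_def)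

lemma has_abil_dx: "((\<lambda>\<tau>. abil (x + \<tau> *\<^sub>R c) y w) has_real_derivative abil_dx x y c w) (at 0)"
proof -
  note d1 = has_rsq_dx[where x=x and c=c] and d2 = has_xdot_dx[where x=x and c=c and y=y]
    and d3 = has_expx0_dx[where x=x and c=c] and d4 = has_inner_snd_dx[where x=x and c=c and w=w]
  show ?thesis unfolding abil_xdot
    by (auto intro!: derivative_eq_intros d1 d2 d3 d4 simp: abil_dx_def xdot_def algebra_simps)
qed

lemma has_dF2y_dx:
  assumes "y \<noteq> 0"
  shows "((\<lambda>\<tau>. dF2y w (x + \<tau> *\<^sub>R c) y) has_real_derivative ddF2xy c w x y) (at 0)"
proof -
  note d1 = has_rsq_dx[where x=x and c=c] and d2 = has_abil_dx[where x=x and c=c and y=y and w=w]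
    and d3 = has_alpha_dx[OF assms, where x=x and c=c] and d4 = has_inner_line[where x=x and c=c and w="snd w"]
    and d5 = has_Fex_dx[OF assms, where x=x and c=c]
  have ap: "alpha x y > 0" using alpha_pos[OF assms] .
  show ?thesis unfolding dF2y_def dFy_def using ap rsq_pos[of x]
    by (auto intro!: derivative_eq_intros d1 d2 d3 d4 d5 simp: ddF2xy_def dFy_def power3_eq_cube power2_eq_square field_simps)
qed

abbreviation Fex_sq :: "'n::finite pt \<Rightarrow> 'n pt \<Rightarrow> real" where
  "Fex_sq \<equiv> (\<lambda>x y. (Fex x y)^2)"

lemma py_Fex_sq: "y \<noteq> 0 \<Longrightarrow> py B Fex_sq x y = dF2y (cbasis B) x y"
  unfolding py_def by (rule DERIV_imp_deriv) (rule has_Fex_sq_dy)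

lemma py_py_Fex_sq:
  assumes "y \<noteq> 0"
  shows "py A (py B Fex_sq) x y = ddF2y (cbasis B) (cbasis A) x y"
proof -
  have "py A (py B Fex_sq) x y = py A (\<lambda>x y. dF2y (cbasis B) x y) x y"
    by (rule py_cong_nonzero) (simp_all add: assms py_Fex_sq)
  also have "\<dots> = ddF2y (cbasis B) (cbasis A) x y"
    unfolding py_def by (rule DERIV_imp_deriv) (rule has_dF2y_dy[OF assms])
  finally show ?thesis .
qed

lemma px_Fex_sq: "y \<noteq> 0 \<Longrightarrow> px B Fex_sq x y = dF2x (cbasis B) x y"
  unfolding px_def by (rule DERIV_imp_deriv) (rule has_Fex_sq_dx)

lemma px_py_Fex_sq:
  assumes "y \<noteq> 0"
  shows "px C (py B Fex_sq) x y = ddF2xy (cbasis C) (cbasis B) x y"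
proof -
  have "(\<lambda>\<tau>. py B Fex_sq (x + \<tau> *\<^sub>R cbasis C) y) = (\<lambda>\<tau>. dF2y (cbasis B) (x + \<tau> *\<^sub>R cbasis C) y)"
    by (rule ext) (simp add: assms py_Fex_sq)
  then show ?thesis unfolding px_def
    by (simp add: DERIV_imp_deriv[OF has_dF2y_dx[OF assms]])
qed

lemma fund_tensor_Fex:
  "y \<noteq> 0 \<Longrightarrow> fund_tensor Fex x y A B = ddF2y (cbasis B) (cbasis A) x y / 2"
  unfolding fund_tensor_def using py_py_Fex_sq by simp

lemma bounded_linear_divide_const[bounded_linear_intros]: "bounded_linear f \<Longrightarrow> bounded_linear (\<lambda>x. f x / (c::real))"
  by (rule bounded_linear_compose[OF bounded_linear_divide])

lemma linear_ddF2y_left: "linear (\<lambda>v. ddF2y v w x y)"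
proof -
  have "bounded_linear (\<lambda>v. ddF2y v w x y)"
    unfolding ddF2y_def dFy_def abil_def by (auto intro!: bounded_linear_intros)
  then show ?thesis by (rule bounded_linear.linear)
qed

lemma linear_ddF2y_right: "linear (\<lambda>w. ddF2y v w x y)"
proof -
  have "bounded_linear (\<lambda>w. ddF2y v w x y)"
    unfolding ddF2y_def dFy_def abil_def by (auto intro!: bounded_linear_intros)
  then show ?thesis by (rule bounded_linear.linear)
qed

lemma linear_ddF2xy_left: "linear (\<lambda>c. ddF2xy c w x y)"
proof -
  have "bounded_linear (\<lambda>c. ddF2xy c w x y)"
    unfolding ddF2xy_def dFx_def half_alpha_sq_dx_def beta_dx_def abil_dx_def
    by (auto intro!: bounded_linear_intros)
  then show ?thesis by (rule bounded_linear.linear)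
qed

section \<open>Strong convexity\<close>

lemma abil_diff_scaleR: "abil x (v - l *\<^sub>R y) (v - l *\<^sub>R y) = abil x v v - 2 * l * abil x y v + l^2 * abil x y y"
  by (simp add: abil_def inner_diff inner_commute power2_eq_square algebra_simps)

lemma dFy_self: "y \<noteq> 0 \<Longrightarrow> dFy x y y = Fex x y"
proof -
  assume y: "y \<noteq> 0"
  have "abil x y y / alpha x y = alpha x y" using alpha_squared[of x y] alpha_pos[OF y, of x]
    by (simp add: alpha_sq_def power2_eq_square field_simps)
  then show ?thesis by (simp add: dFy_def Fex_alpha_beta xdot_def)
qed

lemma dFy_scale: "dFy x y (l *\<^sub>R v) = l * dFy x y v"
  by (simp add: dFy_def abil_def algebra_simps add_divide_distrib)

lemma ddF2y_pos:
  assumes y: "y \<noteq> 0" and v: "v \<noteq> 0"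
  shows "ddF2y v v x y > 0"
proof -
  define l where "l = abil x y v / alpha_sq x y"
  define \<eta> where "\<eta> = v - l *\<^sub>R y"
  have A: "alpha_sq x y > 0" using alpha_sq_pos[OF y] .
  have ap: "alpha x y > 0" using alpha_pos[OF y] .
  have sq: "(alpha x y)^2 = alpha_sq x y" using alpha_squared .
  have F: "Fex x y > 0" using Fex_pos[OF y] .
  have eta: "abil x \<eta> \<eta> = abil x v v - (abil x y v)^2 / alpha_sq x y"
    unfolding \<eta>_def abil_diff_scaleR l_def using A by (simp add: alpha_sq_def power2_eq_square field_simps)
  have key: "abil x v v / alpha x y - abil x y v * abil x v y / (alpha x y)^3 = abil x \<eta> \<eta> / alpha x y"
    unfolding eta using ap sq by (simp add: abil_sym power2_eq_square power3_eq_cube field_simps)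
  have D: "ddF2y v v x y = 2 * (dFy x y v)^2 + 2 * Fex x y * (abil x \<eta> \<eta> / alpha x y)"
    unfolding ddF2y_def key[symmetric] by (simp add: power2_eq_square abil_sym)
  show ?thesis
  proof (cases "\<eta> = 0")
    case False
    have "abil x \<eta> \<eta> > 0" using abil_diag_pos[OF False] .
    then have "2 * Fex x y * (abil x \<eta> \<eta> / alpha x y) > 0" using F ap by simp
    then show ?thesis unfolding D by (smt (verit) zero_le_power2)
  next
    case True
    then have vl: "v = l *\<^sub>R y" unfolding \<eta>_def by simp
    then have "l \<noteq> 0" using v by auto
    then have "dFy x y v \<noteq> 0" using F by (simp add: vl dFy_scale dFy_self[OF y])
    then have "(dFy x y v)^2 > 0" by simp
    moreover have "abil x \<eta> \<eta> = 0" using True by (simp add: abil_def)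
    ultimately show ?thesis unfolding D by simp
  qed
qed

lemma fund_tensor_quadratic_form:
  assumes y: "y \<noteq> 0"
  shows "(\<Sum>A\<in>UNIV. \<Sum>B\<in>UNIV. fund_tensor Fex x y A B * \<xi> A * \<xi> B) = ddF2y (pt_of \<xi>) (pt_of \<xi>) x y / 2"
proof -
  have "(\<Sum>A\<in>UNIV. \<Sum>B\<in>UNIV. fund_tensor Fex x y A B * \<xi> A * \<xi> B)
      = (\<Sum>A\<in>UNIV. \<xi> A / 2 * (\<Sum>B\<in>UNIV. ddF2y (cbasis B) (cbasis A) x y * coord (pt_of \<xi>) B))"
    by (simp add: fund_tensor_Fex[OF y] sum_distrib_left algebra_simps)
  also have "\<dots> = (\<Sum>A\<in>UNIV. ddF2y (pt_of \<xi>) (cbasis A) x y * coord (pt_of \<xi>) A) / 2"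
  proof -
    have i: "\<And>A. (\<Sum>B\<in>UNIV. ddF2y (cbasis B) (cbasis A) x y * coord (pt_of \<xi>) B) = ddF2y (pt_of \<xi>) (cbasis A) x y"
      by (rule linear_sum_coord[OF linear_ddF2y_left])
    show ?thesis unfolding i by (simp add: sum_divide_distrib mult.commute)
  qed
  also have "\<dots> = ddF2y (pt_of \<xi>) (pt_of \<xi>) x y / 2"
    using linear_sum_coord[OF linear_ddF2y_right, of "pt_of \<xi>" x y "pt_of \<xi>"] by simp
  finally show ?thesis .
qed

lemma fund_tensor_pos_definite:
  assumes "y \<noteq> 0" "\<xi> \<noteq> (\<lambda>_. 0)"
  shows "(\<Sum>A\<in>UNIV. \<Sum>B\<in>UNIV. fund_tensor Fex x y A B * \<xi> A * \<xi> B) > 0"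
  unfolding fund_tensor_quadratic_form[OF assms(1)] using ddF2y_pos[OF assms(1) assms(2)[folded pt_of_eq_0_iff]] by simp

section \<open>The geodesic spray\<close>

text \<open>The ansatz \<open>G = \<Gamma> + P y\<close> with \<open>P = N/(2F)\<close>: \<open>spray_quad\<close> is \<open>\<Gamma>\<close>,
  \<open>spray_num\<close> is \<open>N\<close>.\<close>

definition spray_quad :: "'n::finite pt \<Rightarrow> 'n pt \<Rightarrow> 'n pt" where
  "spray_quad x y = ((fst y)^2 / 4,
     (1 / rsq x) *\<^sub>R (xdot x y *\<^sub>R snd y - (rsq x * ysq y - (xdot x y)^2) *\<^sub>R snd x))"

definition spray_num :: "'n::finite pt \<Rightarrow> 'n pt \<Rightarrow> real" where
  "spray_num x y = ysq y / rsq x - 2 * (xdot x y)^2 / (rsq x)^2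
     - 2 * ((xdot x y)^2 - (rsq x * ysq y - (xdot x y)^2) * (rsq x - 1)) / (rsq x)^2"

definition spray_P :: "'n::finite pt \<Rightarrow> 'n pt \<Rightarrow> real" where
  "spray_P x y = spray_num x y / (2 * Fex x y)"

definition spray :: "'n::finite pt \<Rightarrow> 'n pt \<Rightarrow> 'n pt" where
  "spray x y = spray_quad x y + spray_P x y *\<^sub>R y"

lemma inner_snd_self_eq_rsq: "snd x \<bullet> snd x = rsq x - 1" by (simp add: rsq_def)

text \<open>\<open>ddF2y_spray\<close> with every inner product and form value replaced by a real
  variable: \<open>R = 1 + |xb|\<^sup>2\<close>, \<open>s = \<langle>xb,yb\<rangle>\<close>, \<open>q = |yb|\<^sup>2\<close>, \<open>E = exp x0\<close>, \<open>u = y0\<close>,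
  and \<open>H\<close> stands for the spray.\<close>

lemma spray_identity_scalar:
 fixes R s q E u al a b wz F Ap P Hz XH YH WH ayw ayH aHw FvH Fvw Fcy acyw Fcw axy :: real
 assumes R: "R > 0" and al: "al > 0" and A: "al^2 = R*q - s^2 + E*u^2" and Fp: "F > 0"
 and d: "F = al + s/R" "Ap = R*q - s^2" "P = (q/R - 2* s^2/R^2 - 2*(s^2 - Ap*(R-1))/R^2)/(2*F)"
   "Hz = u^2/4 + P*u" "XH = (s* s - Ap*(R-1))/R + P* s" "YH = (s*q - Ap* s)/R + P*q" "WH = (s*b - Ap*a)/R + P*b"
   "ayw = R*b - s*a + E*u*wz" "ayH = R*YH - s*XH + E*u*Hz" "aHw = R*WH - XH*a + E*Hz*wz"
   "FvH = ayH/al + XH/R" "Fvw = ayw/al + a/R"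
   "axy = E*u^3/2" "Fcy = axy/al + q/R - 2* s^2/R^2"
   "acyw = s*b - q*a + E*u^2*wz" "Fcw = (a*q - s*b + E*wz*u^2/2)/al + b/R - 2* s*a/R^2"
 shows "2*(2*FvH*Fvw + 2*F*(aHw/al - ayH*ayw/al^3)) = (2*Fcy*Fvw + 2*F*(acyw/al - ayw*axy/al^3 + b/R - 2*a* s/R^2)) - 2*F*Fcw"
proof -
  have F: "F * R = al * R + s" using d(1) R by (simp add: field_simps)
  have P0: "P * (2*F) = q/R - 2* s^2/R^2 - 2*(s^2 - Ap*(R-1))/R^2" using d(3) Fp by simp
  have P: "2 * F * P * R^2 = q*R - 2* s^2 - 2*(s^2 - Ap*(R-1))"
  proof -
    have "2 * F * P * R^2 = (P * (2*F)) * R^2" by simp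
    also have "\<dots> = q*R - 2* s^2 - 2*(s^2 - Ap*(R-1))" unfolding P0 using R by (simp add: field_simps power2_eq_square)
    finally show ?thesis .
  qed
  show ?thesis
    unfolding d(4-16) using R al Fp
    by (simp add: field_simps) (use F P A d(2) in algebra)
qed

lemma ddF2y_spray:
  assumes y: "y \<noteq> 0"
  shows "2 * ddF2y (spray x y) w x y = ddF2xy y w x y - dF2x w x y"
proof -
  have R: "rsq x > 0" by (rule rsq_pos)
  note S = spray_identity_scalar[where R="rsq x" and al="alpha x y" and q="ysq y" and s="xdot x y" and E="expx0 x" and u="fst y"
     and F="Fex x y" and Ap="rsq x * ysq y - (xdot x y)^2" and P="spray_P x y" and Hz="fst (spray x y)"
     and XH="snd x \<bullet> snd (spray x y)" and YH="snd y \<bullet> snd (spray x y)" and WH="snd (spray x y) \<bullet> snd w"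
     and b="snd y \<bullet> snd w" and a="snd x \<bullet> snd w" and ayw="abil x y w" and wz="fst w"
     and ayH="abil x y (spray x y)" and aHw="abil x (spray x y) w" and FvH="dFy x y (spray x y)" and Fvw="dFy x y w"
     and axy="half_alpha_sq_dx x y y" and Fcy="dFx x y y" and acyw="abil_dx x y y w" and Fcw="dFx x y w"]
  have ap: "alpha x y > 0" by (rule alpha_pos[OF y])
  have X: "2*(2*dFy x y (spray x y)*dFy x y w + 2*Fex x y*(abil x (spray x y) w/alpha x y - abil x y (spray x y)*abil x y w/(alpha x y)^3))
     = (2*dFx x y y*dFy x y w + 2*Fex x y*(abil_dx x y y w/alpha x y - abil x y w*half_alpha_sq_dx x y y/(alpha x y)^3
         + (snd y \<bullet> snd w)/rsq x - 2*(snd x \<bullet> snd w) * xdot x y/(rsq x)^2)) - 2*Fex x y*dFx x y w"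
    by (rule S)
       (use R ap Fex_pos[OF y, of x] alpha_squared[of x y] in
         \<open>simp_all add: alpha_sq_eq Fex_alpha_beta spray_P_def spray_num_def spray_def spray_quad_def
           inner_add_left inner_add_right inner_diff_left inner_diff_right abil_def dFy_def dFx_def
           half_alpha_sq_dx_def beta_dx_def abil_dx_def xdot_def ysq_def inner_snd_self_eq_rsq
           inner_commute power2_eq_square power3_eq_cube\<close>)
  show ?thesis using X by (simp add: ddF2y_def ddF2xy_def dF2x_def xdot_def)
qed

lemma fund_matrix_mult_vec:
  assumes y: "y \<noteq> 0"
  shows "(fund_matrix Fex x y *v z) $ A = ddF2y (pt_of (\<lambda>B. z $ B)) (cbasis A) x y / 2"
proof -
  have "(fund_matrix Fex x y *v z) $ A = (\<Sum>B\<in>UNIV. ddF2y (cbasis B) (cbasis A) x y * coord (pt_of (\<lambda>B. z $ B)) B) / 2"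
    by (simp add: matrix_vector_mult_def fund_matrix_def fund_tensor_Fex[OF y] sum_divide_distrib)
  also have "\<dots> = ddF2y (pt_of (\<lambda>B. z $ B)) (cbasis A) x y / 2"
  proof -
    have "linear (\<lambda>v. ddF2y v (cbasis A) x y)" by (rule linear_ddF2y_left)
    from linear_sum_coord[OF this, of "pt_of (\<lambda>B. z $ B)"] show ?thesis by simp
  qed
  finally show ?thesis .
qed

lemma fund_matrix_kernel:
  assumes y: "y \<noteq> 0" and z: "fund_matrix Fex x y *v z = 0"
  shows "z = 0"
proof (rule ccontr)
  assume nz: "z \<noteq> 0"
  let ?\<xi> = "\<lambda>B. z $ B"
  have xi: "?\<xi> \<noteq> (\<lambda>_. 0)" using nz by (auto simp: vec_eq_iff)
  have "(\<Sum>A\<in>UNIV. \<Sum>B\<in>UNIV. fund_tensor Fex x y A B * ?\<xi> A * ?\<xi> B)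
      = (\<Sum>A\<in>UNIV. ?\<xi> A * (fund_matrix Fex x y *v z) $ A)"
    by (simp add: matrix_vector_mult_def fund_matrix_def sum_distrib_left algebra_simps)
  also have "\<dots> = 0" using z by simp
  finally show False using fund_tensor_pos_definite[OF y xi, of x] by simp
qed

lemma fund_matrix_inv_left:
  assumes y: "y \<noteq> 0"
  shows "matrix_inv (fund_matrix Fex x y) ** fund_matrix Fex x y = mat 1"
proof -
  have "invertible (fund_matrix Fex x y)"
    unfolding invertible_left_inverse matrix_left_invertible_ker using fund_matrix_kernel[OF y] by blast
  then obtain A' where "fund_matrix Fex x y ** A' = mat 1 \<and> A' ** fund_matrix Fex x y = mat 1"
    unfolding invertible_def by blast
  then show ?thesis unfolding matrix_inv_def by (rule someI2) simp
qed

lemma geod_coeff_Fex: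
  assumes y: "y \<noteq> 0"
  shows "geod_coeff Fex A x y = coord (spray x y) A"
proof -
  let ?g = "fund_matrix Fex x y"
  define hv :: "real ^ 'a option" where "hv = (\<chi> A. coord (spray x y) A)"
  define rv :: "real ^ 'a option" where
    "rv = (\<chi> A. (\<Sum>C\<in>UNIV. px C (py A Fex_sq) x y * coord y C) - px A Fex_sq x y)"
  have rv: "rv $ A = ddF2xy y (cbasis A) x y - dF2x (cbasis A) x y" for A
  proof -
    have "rv $ A = (\<Sum>C\<in>UNIV. ddF2xy (cbasis C) (cbasis A) x y * coord y C) - dF2x (cbasis A) x y"
      by (simp add: rv_def px_py_Fex_sq[OF y] px_Fex_sq[OF y])
    moreover have "linear (\<lambda>c. ddF2xy c (cbasis A) x y)" by (rule linear_ddF2xy_left)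
    ultimately show ?thesis using linear_sum_coord[of "\<lambda>c. ddF2xy c (cbasis A) x y" y] by simp
  qed
  have vh: "pt_of (\<lambda>B. hv $ B) = spray x y" by (simp add: hv_def pt_of_coord)
  have ghv: "?g *v hv = (1/4) *\<^sub>R rv"
  proof (subst vec_eq_iff, intro allI)
    fix A
    have "(?g *v hv) $ A = ddF2y (spray x y) (cbasis A) x y / 2" using fund_matrix_mult_vec[OF y, of x hv A] vh by simp
    also have "\<dots> = ((1/4) *\<^sub>R rv) $ A" using ddF2y_spray[OF y, of x "cbasis A"] rv[of A] by simp
    finally show "(?g *v hv) $ A = ((1/4) *\<^sub>R rv) $ A" .
  qed
  have "hv = matrix_inv ?g *v (?g *v hv)"
    by (simp add: matrix_vector_mul_assoc fund_matrix_inv_left[OF y])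
  also have "\<dots> = matrix_inv ?g *v ((1/4) *\<^sub>R rv)" by (simp add: ghv)
  finally have "hv $ A = (matrix_inv ?g *v ((1/4) *\<^sub>R rv)) $ A" by simp
  then have "coord (spray x y) A = (\<Sum>B\<in>UNIV. matrix_inv ?g $ A $ B * (1/4 * rv $ B))"
    by (simp add: hv_def matrix_vector_mult_def)
  then show ?thesis
    by (simp add: geod_coeff_def Let_def rv_def sum_distrib_left mult.left_commute)
qed

lemma bounded_linear_fst_fst:
    "bounded_linear (\<lambda>z::('a::real_normed_vector \<times> 'b::real_normed_vector) \<times> 'c::real_normed_vector. fst (fst z))"
  and bounded_linear_snd_fst: "bounded_linear (\<lambda>z::('a \<times> 'b) \<times> 'c. snd (fst z))"
  and bounded_linear_fst_snd: "bounded_linear (\<lambda>z::'c \<times> ('a \<times> 'b). fst (snd z))"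
  and bounded_linear_snd_snd: "bounded_linear (\<lambda>z::'c \<times> ('a \<times> 'b). snd (snd z))"
  by (intro bounded_linear_compose[OF bounded_linear_fst] bounded_linear_compose[OF bounded_linear_snd]
      bounded_linear_fst bounded_linear_snd)+

context
  fixes U :: "('n::finite pt \<times> 'n pt) set"
  assumes nonzero: "\<And>z. z \<in> U \<Longrightarrow> snd z \<noteq> 0"
begin

lemma smooth_expr_rsq: "smooth_expr U (\<lambda>z. rsq (fst z))"
  unfolding rsq_def by (intro smooth_expr.add smooth_expr.const smooth_expr_inner bounded_linear_snd_fst)

lemma smooth_expr_xdot: "smooth_expr U (\<lambda>z. xdot (fst z) (snd z))"
  unfolding xdot_def by (intro smooth_expr_inner bounded_linear_snd_fst bounded_linear_snd_snd)

lemma smooth_expr_ysq: "smooth_expr U (\<lambda>z. ysq (snd z))"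
  unfolding ysq_def by (intro smooth_expr_inner bounded_linear_snd_snd)

lemma smooth_expr_alpha_sq: "smooth_expr U (\<lambda>z. alpha_sq (fst z) (snd z))"
  unfolding alpha_sq_eq power2_eq_square expx0_def
  by (intro smooth_expr_diff smooth_expr.add smooth_expr.mult smooth_expr.exp smooth_expr.linear
      smooth_expr_rsq smooth_expr_ysq smooth_expr_xdot bounded_linear_fst_fst bounded_linear_fst_snd)

lemma smooth_expr_Fex: "smooth_expr U (\<lambda>z. Fex (fst z) (snd z))"
  unfolding Fex_alpha_beta alpha_def
  by (intro smooth_expr.add smooth_expr_divide smooth_expr.sqrt smooth_expr_alpha_sq smooth_expr_xdot
      smooth_expr_rsq)
     (auto simp: alpha_sq_pos nonzero rsq_pos[THEN less_imp_neq, symmetric])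

lemma smooth_expr_spray_P: "smooth_expr U (\<lambda>z. spray_P (fst z) (snd z))"
  unfolding spray_P_def spray_num_def power2_eq_square
  by (intro smooth_expr_divide smooth_expr_diff smooth_expr.mult smooth_expr.add smooth_expr_rsq
      smooth_expr_ysq smooth_expr_xdot smooth_expr_Fex smooth_expr.const)
     (auto simp: nonzero Fex_pos[THEN less_imp_neq, symmetric] rsq_pos[THEN less_imp_neq, symmetric])

end

section \<open>Vanishing of the Douglas curvature\<close>

lemma poly_in_y_xdot: "poly_in_y 1 xdot"
proof -
  have "poly_in_y 1 (\<lambda>x y. \<Sum>j\<in>UNIV. snd x $ j * coord y (Some j))"
  proof (rule poly_in_y_sum)
    fix j
    show "poly_in_y 1 (\<lambda>x y. snd x $ j * coord y (Some j))"
      using poly_in_y.mult_coord[OF poly_in_y.const[of 0 "\<lambda>x. snd x $ j"], of "Some j"] by simp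
  qed simp
  then show ?thesis unfolding xdot_def[abs_def] inner_vec_def by simp
qed

lemma poly_in_y_ysq: "poly_in_y 2 (\<lambda>x y. ysq y)"
proof -
  have "poly_in_y 2 (\<lambda>x y. \<Sum>j\<in>UNIV. (1 * coord y (Some j)) * coord y (Some j))"
  proof (rule poly_in_y_sum)
    fix j
    show "poly_in_y 2 (\<lambda>x y. (1 * coord y (Some j)) * coord y (Some j))"
      using poly_in_y.mult_coord[OF poly_in_y.mult_coord[OF poly_in_y.const[of 0 "\<lambda>x. 1"], of "Some j"], of "Some j"]
      by (simp add: numeral_2_eq_2)
  qed simp
  then show ?thesis by (simp add: ysq_def inner_vec_def)
qed

lemma poly_in_y_spray_quad: "poly_in_y 2 (\<lambda>x y. coord (spray_quad x y) A)"
proof (cases A)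
  case None
  have "poly_in_y 2 (\<lambda>x y. ((1/4) * coord y None) * coord y None)"
    using poly_in_y.mult_coord[OF poly_in_y.mult_coord[OF poly_in_y.const[of 0 "\<lambda>x. 1/4"], of None], of None]
    by (simp add: numeral_2_eq_2)
  then show ?thesis using None by (simp add: spray_quad_def power2_eq_square)
next
  case (Some i)
  have a: "poly_in_y 2 (\<lambda>x y. xdot x y * coord y (Some i))"
    using poly_in_y.mult_coord[OF poly_in_y_xdot, of "Some i"] by (simp add: numeral_2_eq_2)
  have "poly_in_y 2 (\<lambda>x y. xdot x y * xdot x y)"
    using poly_in_y_mult[OF poly_in_y_xdot poly_in_y_xdot] by (simp add: numeral_2_eq_2)
  then have b: "poly_in_y 2 (\<lambda>x y. snd x $ i * (rsq x * ysq y - xdot x y * xdot x y))"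
    by (intro poly_in_y_cmult poly_in_y_diff poly_in_y_cmult[OF poly_in_y_ysq])
  have "poly_in_y 2 (\<lambda>x y. (1 / rsq x) *
      (xdot x y * coord y (Some i) - snd x $ i * (rsq x * ysq y - xdot x y * xdot x y)))"
    by (rule poly_in_y_cmult[OF poly_in_y_diff[OF a b]])
  then show ?thesis
    using Some by (simp add: spray_quad_def power2_eq_square algebra_simps rsq_pos[THEN less_imp_neq, symmetric])
qed

lemma has_derivative_spray_P:
  assumes "y \<noteq> 0"
  shows "\<exists>D. (spray_P x has_derivative D) (at y)"
proof -
  have "(x, y) \<in> slitTM UNIV" using assms by (simp add: slitTM_def)
  from smooth_expr_has_derivative[OF smooth_expr_spray_P this] obtain D
    where "((\<lambda>z. spray_P (fst z) (snd z)) has_derivative D) (at (x, y))"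
    by (auto simp: slitTM_def)
  moreover have "(Pair x has_derivative Pair 0) (at y)"
    by (auto intro!: derivative_eq_intros)
  ultimately have "(spray_P x has_derivative (\<lambda>h. D (0, h))) (at y)"
    using has_derivative_compose[of "Pair x" "Pair 0" y UNIV "\<lambda>z. spray_P (fst z) (snd z)" D] by simp
  then show ?thesis by blast
qed

lemma has_py_spray_P:
  assumes "y \<noteq> 0"
  shows "((\<lambda>\<tau>. spray_P x (y + \<tau> *\<^sub>R cbasis E)) has_real_derivative py E spray_P x y) (at 0)"
proof -
  obtain D where "(spray_P x has_derivative D) (at y)"
    using has_derivative_spray_P[OF assms] by blast
  then have "((\<lambda>\<tau>. spray_P x (y + \<tau> *\<^sub>R cbasis E)) has_real_derivative D (cbasis E)) (at 0)"
    by (rule has_derivative_imp_line_deriv)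
  moreover from this have "py E spray_P x y = D (cbasis E)"
    unfolding py_def by (rule DERIV_imp_deriv)
  ultimately show ?thesis by simp
qed

lemma spray_P_homogeneous: "c > 0 \<Longrightarrow> spray_P x (c *\<^sub>R y) = c * spray_P x y"
  by (simp add: spray_P_def spray_num_def Fex_homogeneous ysq_def xdot_def
      power2_eq_square algebra_simps diff_divide_distrib add_divide_distrib)

lemma sum_py_spray_P_coord:
  assumes "y \<noteq> 0"
  shows "(\<Sum>E\<in>UNIV. py E spray_P x y * coord y E) = spray_P x y"
proof -
  obtain D where D: "(spray_P x has_derivative D) (at y)"
    using has_derivative_spray_P[OF assms] by blast
  then have "py E spray_P x y = D (cbasis E)" for E
    unfolding py_def by (rule DERIV_imp_deriv[OF has_derivative_imp_line_deriv])
  then have "(\<Sum>E\<in>UNIV. py E spray_P x y * coord y E) = D y"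
    using linear_sum_coord[OF has_derivative_linear[OF D]] by simp
  also have "\<dots> = spray_P x y"
    using has_derivative_homogeneous_Euler[OF D] spray_P_homogeneous by blast
  finally show ?thesis .
qed

lemma sum_py_geod_coeff_Fex:
  fixes y :: "'n::finite pt"
  assumes y: "y \<noteq> 0"
  shows "(\<Sum>E\<in>UNIV. py E (geod_coeff Fex E) x y)
       = (\<Sum>E\<in>UNIV. py E (\<lambda>x y. coord (spray_quad x y) E) x y) + (real CARD('n) + 2) * spray_P x y"
proof -
  have py_E: "py E (geod_coeff Fex E) x y
      = py E (\<lambda>x y. coord (spray_quad x y) E) x y + (py E spray_P x y * coord y E + spray_P x y)" for E
  proof -
    have "py E (geod_coeff Fex E) x y = py E (\<lambda>x y. coord (spray_quad x y) E + spray_P x y * coord y E) x y"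
      by (rule py_cong_nonzero[OF y]) (simp add: geod_coeff_Fex spray_def)
    also have "\<dots> = py E (\<lambda>x y. coord (spray_quad x y) E) x y + (py E spray_P x y * coord y E + spray_P x y)"
      unfolding py_def
      by (rule DERIV_imp_deriv)
         (auto intro!: derivative_eq_intros poly_in_y_has_py[OF poly_in_y_spray_quad, unfolded py_def]
           has_py_spray_P[OF y, unfolded py_def] simp: coord_cbasis)
    finally show ?thesis .
  qed
  have "(\<Sum>E\<in>UNIV. py E (geod_coeff Fex E) x y)
      = (\<Sum>E\<in>UNIV. py E (\<lambda>x y. coord (spray_quad x y) E) x y)
        + (\<Sum>E\<in>UNIV. py E spray_P x y * coord y E) + real CARD('n option) * spray_P x y"
    by (simp add: py_E sum.distrib)
  then show ?thesis
    using sum_py_spray_P_coord[OF y, of x] by (simp add: card_option algebra_simps)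
qed

lemma douglas_Fex_eq_0:
  fixes y :: "'n::finite pt"
  assumes y: "y \<noteq> 0"
  shows "douglas Fex A B C D x y = 0"
proof -
  let ?c = "1 / (real CARD('n) + 2)"
  define T :: "'n pt \<Rightarrow> 'n pt \<Rightarrow> real"
    where "T x y = (\<Sum>E\<in>UNIV. py E (\<lambda>x y. coord (spray_quad x y) E) x y)" for x y
  define Q where "Q x y = coord (spray_quad x y) A - ?c * T x y * coord y A" for x y
  have "poly_in_y 1 (py E (\<lambda>x y. coord (spray_quad x y) E))" for E
    using poly_in_y_py[of 1 "\<lambda>x y. coord (spray_quad x y) E" E] poly_in_y_spray_quad[of E]
    by (simp add: numeral_2_eq_2)
  then have "poly_in_y 1 T"
    unfolding T_def[abs_def] by (intro poly_in_y_sum) simp_all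
  then have "poly_in_y 2 (\<lambda>x y. ?c * T x y * coord y A)"
    using poly_in_y.mult_coord[OF poly_in_y_cmult, of 1 T "\<lambda>x. ?c" A] by (simp add: numeral_2_eq_2)
  then have "poly_in_y 2 Q"
    unfolding Q_def[abs_def] by (rule poly_in_y_diff[OF poly_in_y_spray_quad])
  then have Q3: "poly_in_y 0 (py C (py D Q))"
    by (intro poly_in_y_py) (simp add: numeral_2_eq_2)
  let ?P = "\<lambda>x y. geod_coeff Fex A x y - ?c * (\<Sum>E\<in>UNIV. py E (geod_coeff Fex E) x y) * coord y A"
  have "?P x z = Q x z" if "z \<noteq> 0" for z
    using that by (simp add: sum_py_geod_coeff_Fex geod_coeff_Fex spray_def Q_def T_def field_simps)
  then have "py D ?P x z = py D Q x z" if "z \<noteq> 0" for z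
    by (rule py_cong_nonzero[OF that])
  then have "py C (py D ?P) x z = py C (py D Q) x z" if "z \<noteq> 0" for z
    by (rule py_cong_nonzero[OF that])
  then have "douglas Fex A B C D x y = py B (py C (py D Q)) x y"
    unfolding douglas_def by (rule py_cong_nonzero[OF y])
  also have "\<dots> = 0"
    by (rule py_poly_in_y_0[OF Q3])
  finally show ?thesis .
qed

lemma orthogonal_matrix_inner:
  fixes Q :: "real^'n::finite^'n"
  assumes "orthogonal_matrix Q"
  shows "(Q *v a) \<bullet> (Q *v b) = a \<bullet> b"
proof -
  have "orthogonal_transformation ((*v) Q)"
    using assms by (simp add: orthogonal_transformation_matrix matrix_vector_mul_linear)
  then show ?thesis unfolding orthogonal_transformation_def by blast
qed

theorem cyl_symmetric_Fex: "cyl_symmetric M Fex"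
  unfolding cyl_symmetric_def by (simp add: Fex_def orthogonal_matrix_inner power2_norm_eq_inner)

theorem finsler_metric_Fex:
  assumes "open M"
  shows "finsler_metric M Fex"
proof -
  have "open (slitTM M)"
    unfolding slitTM_def by (intro open_Times assms open_Diff) auto
  then have "smooth_on (slitTM M) (\<lambda>z. Fex (fst z) (snd z))"
    by (rule smooth_expr_smooth_on[OF _ smooth_expr_Fex]) (auto simp: slitTM_def)
  with assms show ?thesis
    unfolding finsler_metric_def using fund_tensor_pos_definite Fex_nonneg Fex_homogeneous by blast
qed

theorem douglas_vanishes_Fex: "douglas_vanishes M Fex"
  unfolding douglas_vanishes_def using douglas_Fex_eq_0 by blast

theorem mainTheorem7:
  fixes \<rho> :: real
  assumes "CARD('n::finite) \<ge> 3" and "\<rho> > 0"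
  shows "finsler_metric (UNIV \<times> ball (0::real^'n) \<rho>) (Fex :: 'n pt \<Rightarrow> 'n pt \<Rightarrow> real)
       \<and> cyl_symmetric (UNIV \<times> ball (0::real^'n) \<rho>) (Fex :: 'n pt \<Rightarrow> 'n pt \<Rightarrow> real)
       \<and> douglas_vanishes (UNIV \<times> ball (0::real^'n) \<rho>) (Fex :: 'n pt \<Rightarrow> 'n pt \<Rightarrow> real)"
  using finsler_metric_Fex[OF open_Times[OF open_UNIV open_ball]] cyl_symmetric_Fex douglas_vanishes_Fex
  by blast

end
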